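(* Let $\mathcal{K}$ be a finite simplicial complex with simplices $\sigma_1,\ldots,\sigma_N$, indexed so that $i<j$ whenever $\sigma_i$ is a proper face of $\sigma_j$. Let $B$ be a triangulated surface and let $f:\mathcal{K}\times B\to\mathbb{R}$ be a piecewise-linear fibered filtration function, with induced simplex indexing $\text{idx}_f$. Let $(v,w)$ be a line segment in $B$ (with endpoints $v,w$) that is not on the boundary of $B$, and let $(\sigma_i,\sigma_j)$ be a pair of distinct simplices of $\mathcal{K}$. 1. If $v$ and $w$ are not the two endpoints of an edge of $B$, let $\Delta$ be the unique triangle of $B$ containing $(v,w)$. Then $(\sigma_i,\sigma_j)$ swaps along $(v,w)$ if and only if $(v,w)$ is detected in $\Delta$ for the pair $(\sigma_i,\sigma_j)$. 2. If $v$ and $w$ are the two endpoints of an edge $e$ of $B$, let $\Delta_1,\Delta_2$ be the two triangles of $B$ adjacent to $e$. Then $(\sigma_i,\sigma_j)$ swaps along $(v,w)$ if and only if $(v,w)$ is detected for the pair $(\sigma_i,\sigma_j)$ in exactly one of $\Delta_1,\Delta_2$.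
   Context: A filtration function on a simplicial complex $\mathcal{K}$ is a function $g:\mathcal{K}\to\mathbb{R}$ with $g(\tau)\le g(\sigma)$ whenever $\tau$ is a face of $\sigma$. A piecewise-linear fibered filtration function with base $B$ (a simplicial complex) is a function $f:\mathcal{K}\times B\to\mathbb{R}$ such that $f(\cdot,p)$ is a filtration function for each $p\in B$ and $f(\sigma,\cdot)$ is linear (affine) on each simplex of $B$ for each $\sigma\in\mathcal{K}$. The induced simplex indexing $\text{idx}_f:\mathcal{K}\times B\to\{1,\ldots,N\}$ is the unique function, bijective in the first argument for each $p$, such that $\text{idx}_f(\sigma_a,p)<\text{idx}_f(\sigma_b,p)$ if either $f(\sigma_a,p)<f(\sigma_b,p)$, or $f(\sigma_a,p)=f(\sigma_b,p)$ and $a<b$. Write $I(\sigma,\tau)=\{p\in B: f(\sigma,p)=f(\tau,p)\}$. Two simplices $\sigma,\tau$ have different relative orders at points $p_1,p_2$ if $(\text{idx}_f(\sigma,p_1)-\text{idx}_f(\tau,p_1))(\text{idx}_f(\sigma,p_2)-\text{idx}_f(\tau,p_2))<0$. Swapping: if $I(\sigma_i,\sigma_j)\cap\Delta$ is a line segment $\ell$ cutting a triangle $\Delta$ into two polygons $Q_1,Q_2$, then $(\sigma_i,\sigma_j)$ swaps along $\ell$ if $\sigma_i,\sigma_j$ have different relative orders at every $p_1\in Q_1$, $p_2\in Q_2$. If $e$ is an edge of $B$ with $e\subseteq I(\sigma_i,\sigma_j)$ and adjacent triangles $\Delta_1,\Delta_2$, then $(\sigma_i,\sigma_j)$ swaps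 along $e$ if $\sigma_i,\sigma_j$ have different relative orders at every $p_1\in\Delta_1\setminus e$, $p_2\in\Delta_2\setminus e$. Detection: for an edge $e$ of $B$ with endpoints $a,b$, a point $v\in e$ is detected along $e$ for the pair $(\sigma,\tau)$ if $\sigma,\tau$ have different relative orders at $a$ and $b$ and $v$ is the (unique) point of $e$ at which the relative order of $\sigma$ and $\tau$ changes, i.e. where $f(\sigma,v)=f(\tau,v)$. A line segment $(v,w)$ is detected in a triangle $\Delta$ for the pair $(\sigma,\tau)$ if $v$ is detected along some edge $e_1$ of $\Delta$ for $(\sigma,\tau)$ and $w$ is detected along some edge $e_2$ of $\Delta$ for $(\sigma,\tau)$. *)

theory Defs
  imports "HOL-Analysis.Analysis"
begin

text \<open>Simplices sigma_1, ..., sigma_N are given by sig 1, ..., sig N (finite nonempty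
  vertex sets).\<close>

definition indexed_simplicial_complex :: "(nat \<Rightarrow> 'v set) \<Rightarrow> nat \<Rightarrow> bool" where
  "indexed_simplicial_complex sig N \<longleftrightarrow>
     (\<forall>k\<in>{1..N}. finite (sig k) \<and> sig k \<noteq> {}) \<and>
     inj_on sig {1..N} \<and>
     (\<forall>k\<in>{1..N}. \<forall>\<tau>. \<tau> \<subseteq> sig k \<and> \<tau> \<noteq> {} \<longrightarrow> \<tau> \<in> sig ` {1..N}) \<and>
     (\<forall>k\<in>{1..N}. \<forall>l\<in>{1..N}. sig k \<subset> sig l \<longrightarrow> k < l)"

definition is_triangle :: "'a::euclidean_space set \<Rightarrow> bool" where
  "is_triangle \<Delta> \<longleftrightarrow> (\<exists>a b c. \<not> collinear {a, b, c} \<and> \<Delta> = convex hull {a, b, c})"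

definition tri_verts :: "'a::euclidean_space set \<Rightarrow> 'a set" where
  "tri_verts \<Delta> = {x. x extreme_point_of \<Delta>}"

definition tri_edges :: "'a::euclidean_space set \<Rightarrow> 'a set set" where
  "tri_edges \<Delta> = {closed_segment a b | a b. a \<in> tri_verts \<Delta> \<and> b \<in> tri_verts \<Delta> \<and> a \<noteq> b}"

definition B_edges :: "'a::euclidean_space set set \<Rightarrow> 'a set set" where
  "B_edges T = \<Union> (tri_edges ` T)"

definition surface_boundary :: "'a::euclidean_space set set \<Rightarrow> 'a set" where
  "surface_boundary T = \<Union> {e \<in> B_edges T. card {\<Delta> \<in> T. e \<in> tri_edges \<Delta>} = 1}"

definition is_surface :: "'a::euclidean_space set \<Rightarrow> bool" where
  "is_surface S \<longleftrightarrow>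
     (\<forall>x\<in>S. \<exists>U V. openin (top_of_set S) U \<and> x \<in> U \<and>
        openin (top_of_set {z :: real \<times> real. snd z \<ge> 0}) V \<and> U homeomorphic V)"

definition triangulated_surface :: "'a::euclidean_space set set \<Rightarrow> bool" where
  "triangulated_surface T \<longleftrightarrow>
     finite T \<and> T \<noteq> {} \<and> (\<forall>\<Delta>\<in>T. is_triangle \<Delta>) \<and>
     (\<forall>\<Delta>1\<in>T. \<forall>\<Delta>2\<in>T. \<Delta>1 = \<Delta>2 \<or> \<Delta>1 \<inter> \<Delta>2 = {} \<or>
        (\<exists>x. x \<in> tri_verts \<Delta>1 \<and> x \<in> tri_verts \<Delta>2 \<and> \<Delta>1 \<inter> \<Delta>2 = {x}) \<or>
        (\<exists>e. e \<in> tri_edges \<Delta>1 \<and> e \<in> tri_edges \<Delta>2 \<and> \<Delta>1 \<inter> \<Delta>2 = e)) \<and>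
     is_surface (\<Union> T)"

definition pl_fibered_filtration ::
  "(nat \<Rightarrow> 'v set) \<Rightarrow> nat \<Rightarrow> 'a::euclidean_space set set \<Rightarrow> ('v set \<Rightarrow> 'a \<Rightarrow> real) \<Rightarrow> bool" where
  "pl_fibered_filtration sig N T f \<longleftrightarrow>
     (\<forall>p\<in>\<Union>T. \<forall>k\<in>{1..N}. \<forall>l\<in>{1..N}. sig k \<subseteq> sig l \<longrightarrow> f (sig k) p \<le> f (sig l) p) \<and>
     (\<forall>k\<in>{1..N}. \<forall>\<Delta>\<in>T. \<exists>L c. linear L \<and> (\<forall>p\<in>\<Delta>. f (sig k) p = L p + c))"

text \<open>Induced simplex indexing: idx_f(sigma_a, p) is the position of a in the strict total
  order "(f(sigma_b,p), b) lexicographically less than (f(sigma_a,p), a)" on {1..N}; this is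
  the unique function bijective in the first argument with the defining property.\<close>
definition idx :: "(nat \<Rightarrow> 'v set) \<Rightarrow> nat \<Rightarrow> ('v set \<Rightarrow> 'a \<Rightarrow> real) \<Rightarrow> nat \<Rightarrow> 'a \<Rightarrow> nat" where
  "idx sig N f a p =
     card {b \<in> {1..N}. f (sig b) p < f (sig a) p \<or> (f (sig b) p = f (sig a) p \<and> b < a)} + 1"

definition diff_order ::
  "(nat \<Rightarrow> 'v set) \<Rightarrow> nat \<Rightarrow> ('v set \<Rightarrow> 'a \<Rightarrow> real) \<Rightarrow> nat \<Rightarrow> nat \<Rightarrow> 'a \<Rightarrow> 'a \<Rightarrow> bool" where
  "diff_order sig N f a b p1 p2 \<longleftrightarrow>
     (int (idx sig N f a p1) - int (idx sig N f b p1)) *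
     (int (idx sig N f a p2) - int (idx sig N f b p2)) < 0"

definition eq_set :: "(nat \<Rightarrow> 'v set) \<Rightarrow> ('v set \<Rightarrow> 'a \<Rightarrow> real) \<Rightarrow> nat \<Rightarrow> nat \<Rightarrow> 'a set" where
  "eq_set sig f a b = {p. f (sig a) p = f (sig b) p}"

definition swaps_in_triangle ::
  "(nat \<Rightarrow> 'v set) \<Rightarrow> nat \<Rightarrow> ('v set \<Rightarrow> 'a::euclidean_space \<Rightarrow> real) \<Rightarrow> nat \<Rightarrow> nat \<Rightarrow> 'a set \<Rightarrow> 'a set \<Rightarrow> bool" where
  "swaps_in_triangle sig N f i j \<Delta> l \<longleftrightarrow>
     eq_set sig f i j \<inter> \<Delta> = l \<and>
     (\<exists>Q1 Q2. Q1 \<noteq> Q2 \<and> components (\<Delta> - l) = {Q1, Q2} \<and>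
        (\<forall>p1\<in>Q1. \<forall>p2\<in>Q2. diff_order sig N f i j p1 p2))"

definition swaps_along_edge ::
  "(nat \<Rightarrow> 'v set) \<Rightarrow> nat \<Rightarrow> ('v set \<Rightarrow> 'a::euclidean_space \<Rightarrow> real) \<Rightarrow> nat \<Rightarrow> nat \<Rightarrow> 'a set \<Rightarrow> 'a set \<Rightarrow> 'a set \<Rightarrow> bool" where
  "swaps_along_edge sig N f i j e \<Delta>1 \<Delta>2 \<longleftrightarrow>
     e \<subseteq> eq_set sig f i j \<and>
     (\<forall>p1\<in>\<Delta>1 - e. \<forall>p2\<in>\<Delta>2 - e. diff_order sig N f i j p1 p2)"

definition detected_along ::
  "(nat \<Rightarrow> 'v set) \<Rightarrow> nat \<Rightarrow> ('v set \<Rightarrow> 'a::euclidean_space \<Rightarrow> real) \<Rightarrow> nat \<Rightarrow> nat \<Rightarrow> 'a \<Rightarrow> 'a \<Rightarrow> 'a \<Rightarrow> bool" where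
  "detected_along sig N f i j a b v \<longleftrightarrow>
     diff_order sig N f i j a b \<and> v \<in> closed_segment a b \<and> f (sig i) v = f (sig j) v"

definition segment_detected_in ::
  "(nat \<Rightarrow> 'v set) \<Rightarrow> nat \<Rightarrow> ('v set \<Rightarrow> 'a::euclidean_space \<Rightarrow> real) \<Rightarrow> nat \<Rightarrow> nat \<Rightarrow> 'a set \<Rightarrow> 'a \<Rightarrow> 'a \<Rightarrow> bool" where
  "segment_detected_in sig N f i j \<Delta> v w \<longleftrightarrow>
     (\<exists>a b. a \<in> tri_verts \<Delta> \<and> b \<in> tri_verts \<Delta> \<and> a \<noteq> b \<and> detected_along sig N f i j a b v) \<and>
     (\<exists>a b. a \<in> tri_verts \<Delta> \<and> b \<in> tri_verts \<Delta> \<and> a \<noteq> b \<and> detected_along sig N f i j a b w)"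

end

theory Submission
  imports Defs
begin

(* Write g = f(sigma_i, -) - f(sigma_j, -) and tie = (j < i). Then sigma_i comes after sigma_j at p
  exactly when (g p, tie) is lexicographically positive, so only the sign of g matters, the tie-break
  deciding on the zero set of g. On each triangle g is affine.
  Inside a triangle: if the zero set of g is the segment (v, w) and cuts the triangle in two, then g
  takes both strict signs at the vertices, and v, w are neither interior points (the zero set would
  continue beyond them) nor inner points of an edge whose ends are ordered alike (g would vanish on
  the whole edge); so they are detected. Conversely, if v and w are detected and not both vertices,
  the zero set of g is a convex set on a line with extreme points v and w, hence the segment (v, w),
  and its complement splits into the two convex sign regions.
  Along an edge (v, w) on which g vanishes, each adjacent triangle lies, off the edge, on the side of
  its opposite vertex c, and the edge is detected in that triangle iff the sign of g c is opposite to
  the tie-break; hence the orders swap across the edge iff exactly one triangle detects it. *)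

lemma idx_less_iff:
  assumes "i \<in> {1..N}" "j \<in> {1..N}" "i \<noteq> j"
  shows "idx sig N f j p < idx sig N f i p \<longleftrightarrow>
     (f (sig j) p < f (sig i) p \<or> (f (sig j) p = f (sig i) p \<and> j < i))"
proof -
  define R where "R = (\<lambda>b a. f (sig b) p < f (sig a) p \<or> (f (sig b) p = f (sig a) p \<and> b < a))"
  have idx_R: "idx sig N f a p = card {b\<in>{1..N}. R b a} + 1" for a
    by (simp add: idx_def R_def)
  have card_mono: "card {b\<in>{1..N}. R b x} < card {b\<in>{1..N}. R b y}" if "R x y" "x \<in> {1..N}" for x y
    by (rule psubset_card_mono) (use that in \<open>auto simp: R_def\<close>)
  have "R j i \<or> R i j"
    using assms unfolding R_def by auto
  then have "idx sig N f j p < idx sig N f i p \<longleftrightarrow> R j i"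
    using card_mono[of i j] card_mono[of j i] assms idx_R by fastforce
  then show ?thesis
    unfolding R_def .
qed

definition lex_pos :: "bool \<Rightarrow> real \<Rightarrow> bool" where
  "lex_pos tie t \<longleftrightarrow> 0 < t \<or> (t = 0 \<and> tie)"

lemma diff_order_iff_lex_pos:
  assumes "i \<in> {1..N}" "j \<in> {1..N}" "i \<noteq> j"
  shows "diff_order sig N f i j p q \<longleftrightarrow>
    lex_pos (j < i) (f (sig i) p - f (sig j) p) \<noteq> lex_pos (j < i) (f (sig i) q - f (sig j) q)"
proof -
  have idx_ne: "idx sig N f i x \<noteq> idx sig N f j x" for x
    using idx_less_iff[OF assms, of sig f x] idx_less_iff[OF assms(2,1) assms(3)[symmetric], of sig f x]
      assms(3) by linarith
  have "lex_pos (j < i) (f (sig i) x - f (sig j) x) \<longleftrightarrow> idx sig N f j x < idx sig N f i x" for x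
    unfolding idx_less_iff[OF assms] lex_pos_def by auto
  then show ?thesis
    unfolding diff_order_def using idx_ne[of p] idx_ne[of q]
    by (cases "idx sig N f j p < idx sig N f i p"; cases "idx sig N f j q < idx sig N f i q")
       (auto simp: mult_less_0_iff)
qed

lemma lex_pos_zero [simp]: "lex_pos tie 0 = tie"
  by (simp add: lex_pos_def)

lemma lex_pos_mult_pos: "0 < \<mu> \<Longrightarrow> lex_pos tie (\<mu> * t) = lex_pos tie t"
  by (auto simp: lex_pos_def zero_less_mult_iff)

lemma combination_zero_cases:
  fixes s t \<mu> \<nu> :: real
  assumes "0 < \<mu>" "0 < \<nu>" "\<mu> * s + \<nu> * t = 0"
  shows "(s = 0 \<and> t = 0) \<or> (s < 0 \<and> 0 < t) \<or> (0 < s \<and> t < 0)"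
proof -
  have "0 < \<mu> * s \<longleftrightarrow> 0 < s" "\<mu> * s < 0 \<longleftrightarrow> s < 0"
    "0 < \<nu> * t \<longleftrightarrow> 0 < t" "\<nu> * t < 0 \<longleftrightarrow> t < 0"
    using assms(1,2) by (simp_all add: zero_less_mult_iff mult_less_0_iff)
  then show ?thesis
    using assms(3) by linarith
qed

definition affine_on :: "'a::real_vector set \<Rightarrow> ('a \<Rightarrow> real) \<Rightarrow> bool" where
  "affine_on S g \<longleftrightarrow> (\<exists>L k. linear L \<and> (\<forall>p\<in>S. g p = L p + k))"

lemma affine_on_combination:
  assumes "affine_on S g" "x \<in> S" "y \<in> S" "z \<in> S" "u + v + w = 1"
    and "u *\<^sub>R x + v *\<^sub>R y + w *\<^sub>R z \<in> S"
  shows "g (u *\<^sub>R x + v *\<^sub>R y + w *\<^sub>R z) = u * g x + v * g y + w * g z"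
proof -
  obtain L k where L: "linear L" and g: "\<forall>p\<in>S. g p = L p + k"
    using assms(1) unfolding affine_on_def by blast
  have "k = (u + v + w) * k"
    using assms(5) by simp
  then show ?thesis
    using assms(2-4,6) by (simp add: g linear_add[OF L] linear_scale[OF L] algebra_simps)
qed

lemma affine_on_segment:
  assumes "affine_on S g" "x \<in> S" "y \<in> S" "(1 - t) *\<^sub>R x + t *\<^sub>R y \<in> S"
  shows "g ((1 - t) *\<^sub>R x + t *\<^sub>R y) = (1 - t) * g x + t * g y"
  using affine_on_combination[OF assms(1-3,3), of "1 - t" t 0] assms(4) by simp

lemma affine_on_zero_at_ends:
  assumes "affine_on S g" "closed_segment x y \<subseteq> S"
    and "p \<in> closed_segment x y" "q \<in> closed_segment x y" "p \<noteq> q" "g p = 0" "g q = 0"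
  shows "g x = 0 \<and> g y = 0"
proof -
  have xy: "x \<in> S" "y \<in> S"
    using assms(2) by auto
  obtain s where s: "p = (1 - s) *\<^sub>R x + s *\<^sub>R y"
    using assms(3) by (auto simp: in_segment)
  obtain t where t: "q = (1 - t) *\<^sub>R x + t *\<^sub>R y"
    using assms(4) by (auto simp: in_segment)
  have "(1 - s) * g x + s * g y = 0" "(1 - t) * g x + t * g y = 0"
    using affine_on_segment[OF assms(1) xy] s t assms(2-4,6,7) by auto
  moreover have "s \<noteq> t"
    using s t assms(5) by auto
  moreover have "(t - s) * (g x - g y) = ((1 - s) * g x + s * g y) - ((1 - t) * g x + t * g y)"
    by (simp add: algebra_simps)
  ultimately have "g x = g y"
    by simp
  then show ?thesis
    using \<open>(1 - s) * g x + s * g y = 0\<close> by (simp add: algebra_simps)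
qed

lemma affine_on_level_sets:
  fixes g :: "'a::euclidean_space \<Rightarrow> real"
  assumes "affine_on S g"
  obtains U Z W where "open U" "convex U" "{p\<in>S. 0 < g p} = S \<inter> U"
    "convex Z" "{p\<in>S. g p = 0} = S \<inter> Z"
    "open W" "convex W" "{p\<in>S. g p < 0} = S \<inter> W"
proof -
  obtain L k where L: "linear L" and g: "\<forall>p\<in>S. g p = L p + k"
    using assms unfolding affine_on_def by blast
  have "continuous_on UNIV L"
    using L linear_conv_bounded_linear linear_continuous_on by blast
  then have "open (L -` {-k<..})" "open (L -` {..<-k})"
    by (simp_all add: open_vimage)
  moreover have "convex (L -` {-k<..})" "convex (L -` {-k})" "convex (L -` {..<-k})"
    by (simp_all add: convex_linear_vimage[OF L])
  moreover have "{p\<in>S. 0 < g p} = S \<inter> L -` {-k<..}" "{p\<in>S. g p = 0} = S \<inter> L -` {-k}"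
    "{p\<in>S. g p < 0} = S \<inter> L -` {..<-k}"
    by (auto simp: g)
  ultimately show ?thesis
    using that by blast
qed

lemma connected_component_eq_open_piece:
  assumes "connected P" "x \<in> P" "P = S \<inter> U" "S \<subseteq> U \<union> W" "S \<inter> U \<inter> W = {}"
    and "open U" "open W"
  shows "connected_component_set S x = P"
proof
  show "P \<subseteq> connected_component_set S x"
    using assms by (intro connected_component_maximal) auto
  let ?C = "connected_component_set S x"
  have "?C \<subseteq> S"
    by (rule connected_component_subset)
  then have "U \<inter> ?C = {} \<or> W \<inter> ?C = {}"
    using connectedD[OF connected_connected_component assms(6,7)] assms(4,5) by blast
  moreover have "x \<in> U \<inter> ?C"
    using assms(2,3) by auto
  ultimately show "?C \<subseteq> P"
    using assms(3,4) \<open>?C \<subseteq> S\<close> by blast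
qed

lemma components_eq_two_open_pieces:
  assumes "S = P \<union> M" "P \<inter> M = {}" "P \<noteq> {}" "M \<noteq> {}" "connected P" "connected M"
    and "P = S \<inter> U" "M = S \<inter> W" "open U" "open W"
  shows "components S = {P, M}"
proof -
  have cover: "S \<subseteq> U \<union> W" "S \<subseteq> W \<union> U"
    and disjoint: "S \<inter> U \<inter> W = {}" "S \<inter> W \<inter> U = {}"
    using assms(1,2,7,8) by auto
  have P: "connected_component_set S x = P" if "x \<in> P" for x
    using connected_component_eq_open_piece[OF assms(5) that assms(7) cover(1) disjoint(1) assms(9,10)] .
  have M: "connected_component_set S x = M" if "x \<in> M" for x
    using connected_component_eq_open_piece[OF assms(6) that assms(8) cover(2) disjoint(2) assms(10,9)] .
  obtain p q where "p \<in> P" "q \<in> M"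
    using assms(3,4) by blast
  then show ?thesis
    unfolding components_def using assms(1) P M by blast
qed

lemma segment_eq_if_extreme_points_collinear:
  fixes Z :: "'a::euclidean_space set"
  assumes "convex Z" "v extreme_point_of Z" "w extreme_point_of Z" "v \<noteq> w"
    and "\<And>p. p \<in> Z \<Longrightarrow> collinear {v, w, p}"
  shows "Z = closed_segment v w"
proof
  have vw: "v \<in> Z" "w \<in> Z"
    using assms(2,3) by (simp_all add: extreme_point_of_def)
  then show "closed_segment v w \<subseteq> Z"
    using assms(1) by (rule closed_segment_subset)
  show "Z \<subseteq> closed_segment v w"
  proof
    fix p assume p: "p \<in> Z"
    then have "v \<in> closed_segment w p \<or> w \<in> closed_segment p v \<or> p \<in> closed_segment v w"
      using assms(5) collinear_between_cases between_mem_segment by metis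
    moreover have "v \<notin> open_segment w p" "w \<notin> open_segment p v"
      using assms(2,3) p vw unfolding extreme_point_of_def by blast+
    ultimately show "p \<in> closed_segment v w"
      using assms(4) by (auto simp: open_segment_def)
  qed
qed

definition detected :: "'a::real_vector set \<Rightarrow> ('a \<Rightarrow> real) \<Rightarrow> bool \<Rightarrow> 'a \<Rightarrow> bool" where
  "detected V g tie u \<longleftrightarrow> (\<exists>x\<in>V. \<exists>y\<in>V. x \<noteq> y \<and> lex_pos tie (g x) \<noteq> lex_pos tie (g y)
      \<and> u \<in> closed_segment x y \<and> g u = 0)"

lemma detected_vertex:
  assumes "u \<in> V" "z \<in> V" "g u = 0" "lex_pos tie (g z) \<noteq> tie"
  shows "detected V g tie u"
  unfolding detected_def using assms by (intro bexI[OF _ assms(1)] bexI[OF _ assms(2)]) auto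

lemma detected_endpoints_iff:
  assumes "v \<noteq> c" "w \<noteq> c"
  shows "detected {v, w, c} g tie v \<and> detected {v, w, c} g tie w \<longleftrightarrow>
    g v = 0 \<and> g w = 0 \<and> lex_pos tie (g c) \<noteq> tie"
proof
  assume "detected {v, w, c} g tie v \<and> detected {v, w, c} g tie w"
  then show "g v = 0 \<and> g w = 0 \<and> lex_pos tie (g c) \<noteq> tie"
    unfolding detected_def by (metis empty_iff insertE lex_pos_zero)
next
  assume "g v = 0 \<and> g w = 0 \<and> lex_pos tie (g c) \<noteq> tie"
  then show "detected {v, w, c} g tie v \<and> detected {v, w, c} g tie w"
    using detected_vertex[of _ "{v, w, c}" c] by simp
qed

definition sign_swaps_across :: "'a::topological_space set \<Rightarrow> 'a set \<Rightarrow> ('a \<Rightarrow> real) \<Rightarrow> bool \<Rightarrow> bool" where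
  "sign_swaps_across \<Delta> l g tie \<longleftrightarrow> {p\<in>\<Delta>. g p = 0} = l \<and>
     (\<exists>Q1 Q2. Q1 \<noteq> Q2 \<and> components (\<Delta> - l) = {Q1, Q2} \<and>
        (\<forall>p1\<in>Q1. \<forall>p2\<in>Q2. lex_pos tie (g p1) \<noteq> lex_pos tie (g p2)))"

locale affine_triangle =
  fixes a b c :: "'a::euclidean_space" and g :: "'a \<Rightarrow> real"
  assumes not_collinear: "\<not> collinear {a, b, c}"
    and affine: "affine_on (convex hull {a, b, c}) g"
begin

lemma distinct_vertices: "a \<noteq> b" "a \<noteq> c" "b \<noteq> c"
  using not_collinear collinear_3_eq_affine_dependent by blast+

lemma affine_independent: "\<not> affine_dependent {a, b, c}"
  using not_collinear collinear_3_eq_affine_dependent by blast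

lemma vertices_in_triangle: "x \<in> {a, b, c} \<Longrightarrow> x \<in> convex hull {a, b, c}"
  by (simp add: hull_inc)

lemma edge_in_triangle: "x \<in> {a, b, c} \<Longrightarrow> y \<in> {a, b, c} \<Longrightarrow> closed_segment x y \<subseteq> convex hull {a, b, c}"
  by (simp add: closed_segment_subset vertices_in_triangle)

lemma edge_face_of:
  assumes "x \<in> {a, b, c}" "y \<in> {a, b, c}"
  shows "closed_segment x y face_of convex hull {a, b, c}"
  unfolding segment_convex_hull
  using face_of_convex_hull_affine_independent[OF affine_independent] assms
  by (metis empty_subsetI insert_subset)

lemma vertex_not_on_opposite_edge: "c \<notin> closed_segment a b"
proof
  assume "c \<in> closed_segment a b"
  then have "{a, b, c} \<subseteq> closed_segment a b"
    by auto
  then show False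
    using not_collinear collinear_subset collinear_closed_segment by blast
qed

lemma barycentric_value:
  assumes "u + v + w = 1" "0 \<le> u" "0 \<le> v" "0 \<le> w"
  shows "g (u *\<^sub>R a + v *\<^sub>R b + w *\<^sub>R c) = u * g a + v * g b + w * g c"
  using assms
  by (intro affine_on_combination[OF affine vertices_in_triangle vertices_in_triangle vertices_in_triangle])
     (auto simp: convex_hull_3)

lemma sign_on_triangle:
  assumes "p \<in> convex hull {a, b, c}"
  shows "\<forall>z\<in>{a, b, c}. 0 \<le> g z \<Longrightarrow> 0 \<le> g p"
    and "\<forall>z\<in>{a, b, c}. g z \<le> 0 \<Longrightarrow> g p \<le> 0"
proof -
  obtain u v w where uvw: "0 \<le> u" "0 \<le> v" "0 \<le> w" "u + v + w = 1"
    and p: "p = u *\<^sub>R a + v *\<^sub>R b + w *\<^sub>R c"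
    using assms unfolding convex_hull_3 by blast
  have gp: "g p = u * g a + v * g b + w * g c"
    unfolding p using barycentric_value uvw by simp
  show "\<forall>z\<in>{a, b, c}. 0 \<le> g z \<Longrightarrow> 0 \<le> g p"
    unfolding gp using uvw by simp
  show "\<forall>z\<in>{a, b, c}. g z \<le> 0 \<Longrightarrow> g p \<le> 0"
    unfolding gp using uvw by (simp add: add_nonpos_nonpos mult_nonneg_nonpos)
qed

lemma zero_on_edge:
  assumes "g a = 0" "g b = 0" "p \<in> closed_segment a b"
  shows "g p = 0"
proof -
  obtain t where p: "p = (1 - t) *\<^sub>R a + t *\<^sub>R b"
    using assms(3) by (auto simp: in_segment)
  have "p \<in> convex hull {a, b, c}"
    using assms(3) edge_in_triangle[of a b] by auto
  then show ?thesis
    using affine_on_segment[OF affine, of a b t] assms(1,2) p by (simp add: vertices_in_triangle)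
qed

lemma sign_off_edge:
  assumes "g a = 0" "g b = 0" "p \<in> convex hull {a, b, c}" "p \<notin> closed_segment a b"
  shows "lex_pos tie (g p) = lex_pos tie (g c)"
proof -
  obtain u v w where uvw: "0 \<le> u" "0 \<le> v" "0 \<le> w" "u + v + w = 1"
    and p: "p = u *\<^sub>R a + v *\<^sub>R b + w *\<^sub>R c"
    using assms(3) unfolding convex_hull_3 by blast
  have "w \<noteq> 0"
  proof
    assume "w = 0"
    then have "u = 1 - v"
      using uvw(4) by simp
    then have "p = (1 - v) *\<^sub>R a + v *\<^sub>R b" "v \<le> 1"
      using p uvw \<open>w = 0\<close> by simp_all
    then show False
      using assms(4) uvw(2) by (auto simp: in_segment)
  qed
  moreover have "g p = w * g c"
    unfolding p using barycentric_value uvw assms(1,2) by simp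
  ultimately show ?thesis
    using uvw(3) by (simp add: lex_pos_mult_pos)
qed

lemma convex_zero_set: "convex {p \<in> convex hull {a, b, c}. g p = 0}"
  by (rule affine_on_level_sets[OF affine]) (simp add: convex_Int)

lemma connected_sign_regions:
  "connected {p \<in> convex hull {a, b, c}. 0 < g p}" "connected {p \<in> convex hull {a, b, c}. g p < 0}"
  by (rule affine_on_level_sets[OF affine], simp add: convex_Int convex_connected)+

lemma open_sign_regions:
  obtains U W where "open U" "{p \<in> convex hull {a, b, c}. 0 < g p} = convex hull {a, b, c} \<inter> U"
    and "open W" "{p \<in> convex hull {a, b, c}. g p < 0} = convex hull {a, b, c} \<inter> W"
proof -
  obtain U Z W where "open U" "convex U" "{p \<in> convex hull {a, b, c}. 0 < g p} = convex hull {a, b, c} \<inter> U"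
    and "convex Z" "{p \<in> convex hull {a, b, c}. g p = 0} = convex hull {a, b, c} \<inter> Z"
    and "open W" "convex W" "{p \<in> convex hull {a, b, c}. g p < 0} = convex hull {a, b, c} \<inter> W"
    by (rule affine_on_level_sets[OF affine])
  then show ?thesis
    using that by blast
qed

lemma boundary_point_on_edge:
  assumes "p \<in> convex hull {a, b, c}" "p \<notin> rel_interior (convex hull {a, b, c})"
  obtains x y where "x \<in> {a, b, c}" "y \<in> {a, b, c}" "x \<noteq> y" "p \<in> closed_segment x y"
proof -
  have "p \<in> rel_frontier (convex hull {a, b, c})"
    using assms by (simp add: rel_frontier_def compact_imp_closed compact_convex_hull)
  then obtain z where z: "z \<in> {a, b, c}" "p \<in> convex hull ({a, b, c} - {z})"
    using rel_frontier_convex_hull_cases[OF affine_independent] by blast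
  have minus: "{a, b, c} - {a} = {b, c}" "{a, b, c} - {b} = {a, c}" "{a, b, c} - {c} = {a, b}"
    using distinct_vertices by blast+
  from z(1) consider "z = a" | "z = b" | "z = c"
    by blast
  then have "p \<in> closed_segment b c \<or> p \<in> closed_segment a c \<or> p \<in> closed_segment a b"
  proof cases
    case 1
    then show ?thesis using z(2) minus(1) segment_convex_hull[of b c] by simp
  next
    case 2
    then show ?thesis using z(2) minus(2) segment_convex_hull[of a c] by simp
  next
    case 3
    then show ?thesis using z(2) minus(3) segment_convex_hull[of a b] by simp
  qed
  then show ?thesis
    by (metis that distinct_vertices insertI1 insertI2)
qed

lemma zero_set_endpoint_not_in_rel_interior:
  assumes "{p \<in> convex hull {a, b, c}. g p = 0} = closed_segment v w" "v \<noteq> w"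
  shows "v \<notin> rel_interior (convex hull {a, b, c})"
proof
  assume "v \<in> rel_interior (convex hull {a, b, c})"
  moreover have vw: "v \<in> convex hull {a, b, c}" "w \<in> convex hull {a, b, c}" "g v = 0" "g w = 0"
    using assms(1) ends_in_segment[of v w] by blast+
  ultimately obtain e where e: "1 < e" "(1 - e) *\<^sub>R w + e *\<^sub>R v \<in> convex hull {a, b, c}"
    using convex_rel_interior_iff[of "convex hull {a, b, c}" v] by auto
  \<comment> \<open>the zero set would continue beyond the endpoint v\<close>
  then have "g ((1 - e) *\<^sub>R w + e *\<^sub>R v) = 0"
    using affine_on_segment[OF affine vw(2,1)] vw(3,4) by simp
  then have "(1 - e) *\<^sub>R w + e *\<^sub>R v \<in> closed_segment v w"
    using assms(1) e(2) by blast
  then obtain t where t: "0 \<le> t" "(1 - e) *\<^sub>R w + e *\<^sub>R v = (1 - t) *\<^sub>R v + t *\<^sub>R w"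
    by (auto simp: in_segment)
  then have "(e - 1 + t) *\<^sub>R (v - w) = 0"
    by (simp add: algebra_simps)
  then show False
    using e(1) t(1) assms(2) by simp
qed

lemma both_signs_if_two_components:
  assumes "components (convex hull {a, b, c} - {p \<in> convex hull {a, b, c}. g p = 0}) = {Q1, Q2}"
    and "Q1 \<noteq> Q2"
  shows "\<exists>z\<in>{a, b, c}. 0 < g z" "\<exists>z\<in>{a, b, c}. g z < 0"
proof -
  let ?D = "convex hull {a, b, c}"
  have disconnected: "\<not> connected (?D - {p \<in> ?D. g p = 0})"
    using assms connected_eq_components_subset_sing[of "?D - {p \<in> ?D. g p = 0}"] by auto
  show "\<exists>z\<in>{a, b, c}. 0 < g z"
  proof (rule ccontr)
    assume "\<not> ?thesis"
    then have "g p \<le> 0" if "p \<in> ?D" for p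
      using sign_on_triangle(2)[OF that] by force
    then have "?D - {p \<in> ?D. g p = 0} = {p \<in> ?D. g p < 0}"
      by force
    then show False
      using disconnected connected_sign_regions(2) by simp
  qed
  show "\<exists>z\<in>{a, b, c}. g z < 0"
  proof (rule ccontr)
    assume "\<not> ?thesis"
    then have "0 \<le> g p" if "p \<in> ?D" for p
      using sign_on_triangle(1)[OF that] by force
    then have "?D - {p \<in> ?D. g p = 0} = {p \<in> ?D. 0 < g p}"
      by force
    then show False
      using disconnected connected_sign_regions(1) by simp
  qed
qed

lemma edge_ends_zero_if_same_lex_pos:
  assumes "x \<in> {a, b, c}" "y \<in> {a, b, c}" "u \<in> open_segment x y" "g u = 0"
    and "lex_pos tie (g x) = lex_pos tie (g y)"
  shows "g x = 0 \<and> g y = 0"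
proof -
  obtain t where t: "0 < t" "t < 1" "u = (1 - t) *\<^sub>R x + t *\<^sub>R y"
    using assms(3) by (auto simp: in_segment)
  have "u \<in> convex hull {a, b, c}"
    using open_closed_segment[OF assms(3)] edge_in_triangle[OF assms(1,2)] by blast
  then have "(1 - t) * g x + t * g y = 0"
    using affine_on_segment[OF affine, of x y t] assms(1,2,4) t(3) by (simp add: vertices_in_triangle)
  then show ?thesis
    using combination_zero_cases[of "1 - t" t "g x" "g y"] t(1,2) assms(5) by (auto simp: lex_pos_def)
qed

lemma detected_if_sign_swaps_across:
  assumes "sign_swaps_across (convex hull {a, b, c}) (closed_segment v w) g tie" "v \<noteq> w"
  shows "detected {a, b, c} g tie v"
proof -
  let ?D = "convex hull {a, b, c}"
  obtain Q1 Q2 where Z: "{p \<in> ?D. g p = 0} = closed_segment v w"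
    and Q: "components (?D - {p \<in> ?D. g p = 0}) = {Q1, Q2}" "Q1 \<noteq> Q2"
    using assms(1) unfolding sign_swaps_across_def by metis
  have v: "v \<in> ?D" "g v = 0"
    using Z ends_in_segment(1)[of v w] by blast+
  have opposite: "\<exists>z\<in>{a, b, c}. lex_pos tie (g z) \<noteq> tie"
    using both_signs_if_two_components[OF Q] by (cases tie) (auto simp: lex_pos_def)
  obtain x y where xy: "x \<in> {a, b, c}" "y \<in> {a, b, c}" "x \<noteq> y" "v \<in> closed_segment x y"
    using boundary_point_on_edge[OF v(1) zero_set_endpoint_not_in_rel_interior[OF Z assms(2)]] .
  consider "lex_pos tie (g x) \<noteq> lex_pos tie (g y)" | "v = x \<or> v = y"
    | "lex_pos tie (g x) = lex_pos tie (g y)" "v \<in> open_segment x y"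
    using xy(4) open_segment_def by blast
  then show ?thesis
  proof cases
    case 1
    then show ?thesis
      unfolding detected_def using xy v(2) by blast
  next
    case 2
    then show ?thesis
      using opposite detected_vertex[of v "{a, b, c}"] xy v(2) by blast
  next
    case 3
    then have "g x = 0 \<and> g y = 0"
      using edge_ends_zero_if_same_lex_pos xy(1,2) v(2) by blast
    then have "x \<in> closed_segment v w" "y \<in> closed_segment v w"
      using Z xy(1,2) vertices_in_triangle by blast+
    moreover have "v extreme_point_of closed_segment v w"
      by (simp add: extreme_point_of_segment)
    ultimately show ?thesis
      using 3(2) unfolding extreme_point_of_def by blast
  qed
qed

lemma detected_non_vertex_both_signs:
  assumes "detected {a, b, c} g tie u" "u \<notin> {a, b, c}"
  shows "\<exists>z\<in>{a, b, c}. 0 < g z" "\<exists>z\<in>{a, b, c}. g z < 0"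
proof -
  obtain x y where xy: "x \<in> {a, b, c}" "y \<in> {a, b, c}" "lex_pos tie (g x) \<noteq> lex_pos tie (g y)"
    "u \<in> closed_segment x y" "g u = 0"
    using assms(1) unfolding detected_def by blast
  obtain t where t: "0 \<le> t" "t \<le> 1" "u = (1 - t) *\<^sub>R x + t *\<^sub>R y"
    using xy(4) by (auto simp: in_segment)
  have "t \<noteq> 0" "t \<noteq> 1"
    using t(3) xy(1,2) assms(2) by auto
  moreover have "(1 - t) * g x + t * g y = 0"
    using affine_on_segment[OF affine, of x y t] xy(1,2,5) t(3) edge_in_triangle[OF xy(1,2)] xy(4)
    by (auto simp: vertices_in_triangle)
  ultimately have "(g x < 0 \<and> 0 < g y) \<or> (0 < g x \<and> g y < 0)"
    using combination_zero_cases[of "1 - t" t "g x" "g y"] t(1,2) xy(3) by auto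
  then show "\<exists>z\<in>{a, b, c}. 0 < g z" "\<exists>z\<in>{a, b, c}. g z < 0"
    using xy(1,2) by blast+
qed

lemma zero_set_collinear:
  assumes "\<exists>z\<in>{a, b, c}. g z \<noteq> 0"
    and "{p, q, r} \<subseteq> {x \<in> convex hull {a, b, c}. g x = 0}"
  shows "collinear {p, q, r}"
proof (rule ccontr)
  let ?D = "convex hull {a, b, c}"
  assume "\<not> collinear {p, q, r}"
  then have "\<not> affine_dependent {p, q, r}" "p \<noteq> q" "p \<noteq> r" "q \<noteq> r"
    using collinear_3_eq_affine_dependent by blast+
  then have "aff_dim {p, q, r} = 2"
    using aff_dim_affine_independent[of "{p, q, r}"] by simp
  moreover have "aff_dim ?D = 2"
    using aff_dim_affine_independent[OF affine_independent] distinct_vertices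
    by (simp add: aff_dim_convex_hull)
  ultimately have "aff_dim {p, q, r} = aff_dim ?D"
    by simp
  moreover have "{p, q, r} \<subseteq> ?D"
    using assms(2) by auto
  ultimately have hull_eq: "affine hull {p, q, r} = affine hull ?D"
    using aff_dim_eq_full_gen by blast
  have "g z = 0" if "z \<in> {a, b, c}" for z
  proof -
    have "z \<in> affine hull {p, q, r}"
      using that hull_eq by (simp add: hull_inc)
    then obtain u v w where "u + v + w = 1" "z = u *\<^sub>R p + v *\<^sub>R q + w *\<^sub>R r"
      unfolding affine_hull_3 by blast
    then show "g z = 0"
      using affine_on_combination[OF affine, of p q r u v w] assms(2) that vertices_in_triangle by auto
  qed
  then show False
    using assms(1) by blast
qed

lemma detected_extreme_point_of_zero_set:
  assumes "detected {a, b, c} g tie u"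
  shows "u extreme_point_of {p \<in> convex hull {a, b, c}. g p = 0}"
proof -
  obtain x y where xy: "x \<in> {a, b, c}" "y \<in> {a, b, c}" "lex_pos tie (g x) \<noteq> lex_pos tie (g y)"
    "u \<in> closed_segment x y" "g u = 0"
    using assms unfolding detected_def by blast
  show ?thesis
    unfolding extreme_point_of_def
  proof (intro conjI ballI notI)
    show "u \<in> {p \<in> convex hull {a, b, c}. g p = 0}"
      using xy(4,5) edge_in_triangle[OF xy(1,2)] by blast
  next
    fix p q
    assume p: "p \<in> {p \<in> convex hull {a, b, c}. g p = 0}"
      and q: "q \<in> {p \<in> convex hull {a, b, c}. g p = 0}" and u: "u \<in> open_segment p q"
    then have "p \<in> closed_segment x y" "q \<in> closed_segment x y"
      using edge_face_of[OF xy(1,2)] xy(4) unfolding face_of_def by blast+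
    moreover have "p \<noteq> q"
      using u by auto
    ultimately have "g x = 0 \<and> g y = 0"
      using affine_on_zero_at_ends[OF affine edge_in_triangle[OF xy(1,2)]] p q by blast
    then show False
      using xy(3) by simp
  qed
qed

lemma zero_set_eq_segment_if_detected:
  assumes "detected {a, b, c} g tie v" "detected {a, b, c} g tie w" "v \<noteq> w"
    and "\<exists>z\<in>{a, b, c}. g z \<noteq> 0"
  shows "{p \<in> convex hull {a, b, c}. g p = 0} = closed_segment v w"
proof -
  have v: "v extreme_point_of {p \<in> convex hull {a, b, c}. g p = 0}"
    and w: "w extreme_point_of {p \<in> convex hull {a, b, c}. g p = 0}"
    using detected_extreme_point_of_zero_set assms(1,2) by blast+
  show ?thesis
  proof (rule segment_eq_if_extreme_points_collinear[OF convex_zero_set v w assms(3)])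
    show "collinear {v, w, p}" if "p \<in> {p \<in> convex hull {a, b, c}. g p = 0}" for p
      using zero_set_collinear assms(4) that v w unfolding extreme_point_of_def by auto
  qed
qed

lemma components_complement_zero_set:
  assumes "\<exists>z\<in>{a, b, c}. 0 < g z" "\<exists>z\<in>{a, b, c}. g z < 0"
  shows "components (convex hull {a, b, c} - {p \<in> convex hull {a, b, c}. g p = 0}) =
    {{p \<in> convex hull {a, b, c}. 0 < g p}, {p \<in> convex hull {a, b, c}. g p < 0}}"
proof -
  let ?D = "convex hull {a, b, c}"
  obtain U W where U: "open U" "{p\<in>?D. 0 < g p} = ?D \<inter> U"
    and W: "open W" "{p\<in>?D. g p < 0} = ?D \<inter> W"
    by (rule open_sign_regions)
  have pieces: "?D - {p\<in>?D. g p = 0} = {p\<in>?D. 0 < g p} \<union> {p\<in>?D. g p < 0}"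
    by auto
  show ?thesis
  proof (rule components_eq_two_open_pieces[OF pieces])
    show "{p\<in>?D. 0 < g p} \<inter> {p\<in>?D. g p < 0} = {}"
      by auto
    show "{p\<in>?D. 0 < g p} \<noteq> {}" "{p\<in>?D. g p < 0} \<noteq> {}"
      using assms vertices_in_triangle by blast+
    show "connected {p\<in>?D. 0 < g p}" "connected {p\<in>?D. g p < 0}"
      by (fact connected_sign_regions)+
    show "{p\<in>?D. 0 < g p} = (?D - {p\<in>?D. g p = 0}) \<inter> U"
      using U(2) unfolding pieces set_eq_iff by auto
    show "{p\<in>?D. g p < 0} = (?D - {p\<in>?D. g p = 0}) \<inter> W"
      using W(2) unfolding pieces set_eq_iff by auto
  qed fact+
qed

lemma sign_swaps_across_if_detected:
  assumes "detected {a, b, c} g tie v" "detected {a, b, c} g tie w" "v \<noteq> w"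
    and "\<not> (v \<in> {a, b, c} \<and> w \<in> {a, b, c})"
  shows "sign_swaps_across (convex hull {a, b, c}) (closed_segment v w) g tie"
proof -
  let ?D = "convex hull {a, b, c}"
  obtain u where "detected {a, b, c} g tie u" "u \<notin> {a, b, c}"
    using assms(1,2,4) by blast
  note pos = detected_non_vertex_both_signs(1)[OF this]
    and neg = detected_non_vertex_both_signs(2)[OF this]
  have zero_set: "{p \<in> ?D. g p = 0} = closed_segment v w"
    using zero_set_eq_segment_if_detected[OF assms(1-3)] pos by force
  have "components (?D - closed_segment v w) = {{p\<in>?D. 0 < g p}, {p\<in>?D. g p < 0}}"
    using components_complement_zero_set[OF pos neg] unfolding zero_set .
  moreover have "{p\<in>?D. 0 < g p} \<noteq> {p\<in>?D. g p < 0}"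
    using pos vertices_in_triangle by fastforce
  moreover have "\<forall>p1\<in>{p\<in>?D. 0 < g p}. \<forall>p2\<in>{p\<in>?D. g p < 0}. lex_pos tie (g p1) \<noteq> lex_pos tie (g p2)"
    by (auto simp: lex_pos_def)
  ultimately have "\<exists>Q1 Q2. Q1 \<noteq> Q2 \<and> components (?D - closed_segment v w) = {Q1, Q2} \<and>
      (\<forall>p1\<in>Q1. \<forall>p2\<in>Q2. lex_pos tie (g p1) \<noteq> lex_pos tie (g p2))"
    by blast
  then show ?thesis
    unfolding sign_swaps_across_def using zero_set by simp
qed

lemma sign_swaps_across_iff_detected:
  assumes "v \<noteq> w" "\<not> (v \<in> {a, b, c} \<and> w \<in> {a, b, c})"
  shows "sign_swaps_across (convex hull {a, b, c}) (closed_segment v w) g tie \<longleftrightarrow>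
    detected {a, b, c} g tie v \<and> detected {a, b, c} g tie w"
proof
  assume swaps: "sign_swaps_across (convex hull {a, b, c}) (closed_segment v w) g tie"
  then have "sign_swaps_across (convex hull {a, b, c}) (closed_segment w v) g tie"
    by (simp add: closed_segment_commute)
  then show "detected {a, b, c} g tie v \<and> detected {a, b, c} g tie w"
    using detected_if_sign_swaps_across[OF swaps assms(1)]
      detected_if_sign_swaps_across[OF _ assms(1)[symmetric]] by blast
next
  assume "detected {a, b, c} g tie v \<and> detected {a, b, c} g tie w"
  then show "sign_swaps_across (convex hull {a, b, c}) (closed_segment v w) g tie"
    using sign_swaps_across_if_detected assms by blast
qed

end

lemma sign_swaps_along_common_edge:
  assumes "affine_triangle v w c1 g" "affine_triangle v w c2 g"
  shows "((\<forall>p\<in>closed_segment v w. g p = 0) \<and>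
      (\<forall>p1\<in>convex hull {v, w, c1} - closed_segment v w. \<forall>p2\<in>convex hull {v, w, c2} - closed_segment v w.
         lex_pos tie (g p1) \<noteq> lex_pos tie (g p2))) \<longleftrightarrow>
    g v = 0 \<and> g w = 0 \<and> lex_pos tie (g c1) \<noteq> lex_pos tie (g c2)"
proof (cases "g v = 0 \<and> g w = 0")
  case True
  have "c1 \<in> convex hull {v, w, c1} - closed_segment v w" "c2 \<in> convex hull {v, w, c2} - closed_segment v w"
    using affine_triangle.vertex_not_on_opposite_edge[OF assms(1)]
      affine_triangle.vertex_not_on_opposite_edge[OF assms(2)] by (simp_all add: hull_inc)
  moreover have "lex_pos tie (g p) = lex_pos tie (g c1)" if "p \<in> convex hull {v, w, c1} - closed_segment v w" for p
    using affine_triangle.sign_off_edge[OF assms(1)] True that by blast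
  moreover have "lex_pos tie (g p) = lex_pos tie (g c2)" if "p \<in> convex hull {v, w, c2} - closed_segment v w" for p
    using affine_triangle.sign_off_edge[OF assms(2)] True that by blast
  moreover have "\<forall>p\<in>closed_segment v w. g p = 0"
    using affine_triangle.zero_on_edge[OF assms(1)] True by blast
  ultimately show ?thesis
    using True by metis
next
  case False
  then show ?thesis
    by auto
qed

lemma tri_verts_convex_hull:
  assumes "\<not> collinear {a, b, c}"
  shows "tri_verts (convex hull {a, b, c}) = {a, b, c}"
  using assms collinear_3_eq_affine_dependent extreme_point_of_convex_hull_affine_independent
  unfolding tri_verts_def by blast

lemma triangle_with_edge:
  assumes "is_triangle \<Delta>" "closed_segment v w \<in> tri_edges \<Delta>" "v \<noteq> w"
  obtains c where "\<not> collinear {v, w, c}" "\<Delta> = convex hull {v, w, c}"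
proof -
  obtain a b c where nc: "\<not> collinear {a, b, c}" and \<Delta>: "\<Delta> = convex hull {a, b, c}"
    using assms(1) unfolding is_triangle_def by blast
  obtain x y where "x \<in> {a, b, c}" "y \<in> {a, b, c}" "closed_segment v w = closed_segment x y"
    using assms(2) unfolding tri_edges_def \<Delta> tri_verts_convex_hull[OF nc] by blast
  moreover from this(3) have "{v, w} = {x, y}"
    by simp
  ultimately have "v \<in> {a, b, c}" "w \<in> {a, b, c}"
    by blast+
  then have "\<exists>c'. {a, b, c} = {v, w, c'}"
    using assms(3) by (auto simp: insert_commute)
  then show ?thesis
    using that nc \<Delta> by auto
qed

lemma affine_on_filtration_difference:
  assumes "pl_fibered_filtration sig N T f" "\<Delta> \<in> T" "i \<in> {1..N}" "j \<in> {1..N}"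
  shows "affine_on \<Delta> (\<lambda>p. f (sig i) p - f (sig j) p)"
proof -
  obtain Li ci where i: "linear Li" "\<forall>p\<in>\<Delta>. f (sig i) p = Li p + ci"
    using assms unfolding pl_fibered_filtration_def by blast
  obtain Lj cj where j: "linear Lj" "\<forall>p\<in>\<Delta>. f (sig j) p = Lj p + cj"
    using assms unfolding pl_fibered_filtration_def by blast
  have "linear (\<lambda>p. Li p - Lj p)"
    using i(1) j(1) by (rule linear_compose_sub)
  moreover have "\<forall>p\<in>\<Delta>. f (sig i) p - f (sig j) p = (Li p - Lj p) + (ci - cj)"
    using i(2) j(2) by simp
  ultimately show ?thesis
    unfolding affine_on_def by blast
qed

lemma segment_detected_in_iff_detected:
  assumes "i \<in> {1..N}" "j \<in> {1..N}" "i \<noteq> j"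
  shows "segment_detected_in sig N f i j \<Delta> v w \<longleftrightarrow>
    detected (tri_verts \<Delta>) (\<lambda>p. f (sig i) p - f (sig j) p) (j < i) v \<and>
    detected (tri_verts \<Delta>) (\<lambda>p. f (sig i) p - f (sig j) p) (j < i) w"
  unfolding segment_detected_in_def detected_along_def detected_def diff_order_iff_lex_pos[OF assms]
  by auto

lemma swaps_in_triangle_iff_sign_swaps_across:
  assumes "i \<in> {1..N}" "j \<in> {1..N}" "i \<noteq> j"
  shows "swaps_in_triangle sig N f i j \<Delta> l \<longleftrightarrow>
    sign_swaps_across \<Delta> l (\<lambda>p. f (sig i) p - f (sig j) p) (j < i)"
proof -
  have "eq_set sig f i j \<inter> \<Delta> = {p\<in>\<Delta>. f (sig i) p - f (sig j) p = 0}"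
    unfolding eq_set_def by auto
  then show ?thesis
    unfolding swaps_in_triangle_def sign_swaps_across_def diff_order_iff_lex_pos[OF assms] by simp
qed

lemma swaps_along_edge_iff_lex_pos:
  assumes "i \<in> {1..N}" "j \<in> {1..N}" "i \<noteq> j"
  shows "swaps_along_edge sig N f i j e \<Delta>1 \<Delta>2 \<longleftrightarrow>
    (\<forall>p\<in>e. f (sig i) p - f (sig j) p = 0) \<and>
    (\<forall>p1\<in>\<Delta>1 - e. \<forall>p2\<in>\<Delta>2 - e. lex_pos (j < i) (f (sig i) p1 - f (sig j) p1) \<noteq>
                                   lex_pos (j < i) (f (sig i) p2 - f (sig j) p2))"
  unfolding swaps_along_edge_def eq_set_def diff_order_iff_lex_pos[OF assms] by auto

lemma swaps_in_triangle_iff_segment_detected: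
  assumes "is_triangle \<Delta>" "affine_on \<Delta> (\<lambda>p. f (sig i) p - f (sig j) p)"
    and "v \<noteq> w" "closed_segment v w \<notin> tri_edges \<Delta>"
    and "i \<in> {1..N}" "j \<in> {1..N}" "i \<noteq> j"
  shows "swaps_in_triangle sig N f i j \<Delta> (closed_segment v w) \<longleftrightarrow> segment_detected_in sig N f i j \<Delta> v w"
proof -
  obtain a b c where nc: "\<not> collinear {a, b, c}" and \<Delta>: "\<Delta> = convex hull {a, b, c}"
    using assms(1) unfolding is_triangle_def by blast
  have tri: "affine_triangle a b c (\<lambda>p. f (sig i) p - f (sig j) p)"
    using nc assms(2) \<Delta> by (simp add: affine_triangle_def)
  have "\<not> (v \<in> {a, b, c} \<and> w \<in> {a, b, c})"
    using assms(3,4) unfolding tri_edges_def \<Delta> tri_verts_convex_hull[OF nc] by blast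
  then show ?thesis
    unfolding swaps_in_triangle_iff_sign_swaps_across[OF assms(5-7)]
      segment_detected_in_iff_detected[OF assms(5-7)] \<Delta> tri_verts_convex_hull[OF nc]
    using affine_triangle.sign_swaps_across_iff_detected[OF tri assms(3)] by blast
qed

lemma swaps_along_edge_iff_detected_in_one:
  assumes "is_triangle \<Delta>1" "is_triangle \<Delta>2"
    and "affine_on \<Delta>1 (\<lambda>p. f (sig i) p - f (sig j) p)" "affine_on \<Delta>2 (\<lambda>p. f (sig i) p - f (sig j) p)"
    and "closed_segment v w \<in> tri_edges \<Delta>1" "closed_segment v w \<in> tri_edges \<Delta>2" "v \<noteq> w"
    and ij: "i \<in> {1..N}" "j \<in> {1..N}" "i \<noteq> j"
  shows "swaps_along_edge sig N f i j (closed_segment v w) \<Delta>1 \<Delta>2 \<longleftrightarrow>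
    (segment_detected_in sig N f i j \<Delta>1 v w \<noteq> segment_detected_in sig N f i j \<Delta>2 v w)"
proof -
  obtain c1 where c1: "\<not> collinear {v, w, c1}" "\<Delta>1 = convex hull {v, w, c1}"
    using triangle_with_edge[OF assms(1,5,7)] .
  obtain c2 where c2: "\<not> collinear {v, w, c2}" "\<Delta>2 = convex hull {v, w, c2}"
    using triangle_with_edge[OF assms(2,6,7)] .
  have tri1: "affine_triangle v w c1 (\<lambda>p. f (sig i) p - f (sig j) p)"
    using c1 assms(3) by (simp add: affine_triangle_def)
  have tri2: "affine_triangle v w c2 (\<lambda>p. f (sig i) p - f (sig j) p)"
    using c2 assms(4) by (simp add: affine_triangle_def)
  have d1: "v \<noteq> c1" "w \<noteq> c1" and d2: "v \<noteq> c2" "w \<noteq> c2"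
    using affine_triangle.distinct_vertices[OF tri1] affine_triangle.distinct_vertices[OF tri2] by blast+
  show ?thesis
    unfolding swaps_along_edge_iff_lex_pos[OF ij] segment_detected_in_iff_detected[OF ij]
      c1(2) c2(2) tri_verts_convex_hull[OF c1(1)] tri_verts_convex_hull[OF c2(1)]
      sign_swaps_along_common_edge[OF tri1 tri2] detected_endpoints_iff[OF d1]
      detected_endpoints_iff[OF d2]
    by auto
qed

theorem lemmaA3:
  fixes sig :: "nat \<Rightarrow> 'v set" and N :: nat
    and T :: "'a::euclidean_space set set"
    and f :: "'v set \<Rightarrow> 'a \<Rightarrow> real"
    and v w :: 'a and i j :: nat
  assumes K: "indexed_simplicial_complex sig N"
    and B: "triangulated_surface T"
    and F: "pl_fibered_filtration sig N T f"
    and seg: "v \<noteq> w" "closed_segment v w \<subseteq> \<Union> T"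
      "\<not> closed_segment v w \<subseteq> surface_boundary T"
    and ij: "i \<in> {1..N}" "j \<in> {1..N}" "i \<noteq> j"
  shows "(\<forall>\<Delta>. closed_segment v w \<notin> B_edges T \<and> \<Delta> \<in> T \<and> closed_segment v w \<subseteq> \<Delta> \<and>
              (\<forall>\<Delta>'\<in>T. closed_segment v w \<subseteq> \<Delta>' \<longrightarrow> \<Delta>' = \<Delta>) \<longrightarrow>
            (swaps_in_triangle sig N f i j \<Delta> (closed_segment v w) \<longleftrightarrow>
             segment_detected_in sig N f i j \<Delta> v w))
       \<and> (\<forall>\<Delta>1 \<Delta>2. closed_segment v w \<in> B_edges T \<and> \<Delta>1 \<in> T \<and> \<Delta>2 \<in> T \<and> \<Delta>1 \<noteq> \<Delta>2 \<and>
              closed_segment v w \<in> tri_edges \<Delta>1 \<and> closed_segment v w \<in> tri_edges \<Delta>2 \<longrightarrow>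
            (swaps_along_edge sig N f i j (closed_segment v w) \<Delta>1 \<Delta>2 \<longleftrightarrow>
             (segment_detected_in sig N f i j \<Delta>1 v w \<noteq> segment_detected_in sig N f i j \<Delta>2 v w)))"
proof -
  have triangle: "is_triangle \<Delta>" if "\<Delta> \<in> T" for \<Delta>
    using B that unfolding triangulated_surface_def by auto
  have affine: "affine_on \<Delta> (\<lambda>p. f (sig i) p - f (sig j) p)" if "\<Delta> \<in> T" for \<Delta>
    using affine_on_filtration_difference[OF F that ij(1,2)] .
  show ?thesis
  proof (intro conjI allI impI; elim conjE)
    fix \<Delta>
    assume "closed_segment v w \<notin> B_edges T" "\<Delta> \<in> T"
    then have "closed_segment v w \<notin> tri_edges \<Delta>"
      unfolding B_edges_def by blast
    then show "swaps_in_triangle sig N f i j \<Delta> (closed_segment v w) \<longleftrightarrow>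
        segment_detected_in sig N f i j \<Delta> v w"
      using swaps_in_triangle_iff_segment_detected[OF triangle affine seg(1) _ ij] \<open>\<Delta> \<in> T\<close> by blast
  next
    fix \<Delta>1 \<Delta>2
    assume "\<Delta>1 \<in> T" "\<Delta>2 \<in> T"
      and "closed_segment v w \<in> tri_edges \<Delta>1" "closed_segment v w \<in> tri_edges \<Delta>2"
    then show "swaps_along_edge sig N f i j (closed_segment v w) \<Delta>1 \<Delta>2 \<longleftrightarrow>
        (segment_detected_in sig N f i j \<Delta>1 v w \<noteq> segment_detected_in sig N f i j \<Delta>2 v w)"
      by (intro swaps_along_edge_iff_detected_in_one triangle affine seg(1) ij)
  qed
qed

end
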